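(* Let $f$ satisfy conditions (1) and (2b), let $p>0$, $a=p/\pi$, and $n\in\mathbb{N}_0$. In the expression \[ 2\pi\int_0^\infty a\sum_{k=0}^\infty c_{2k}\,p^k\sum_{l=0}^k(-1)^{k-l}\frac{p^l}{(k-l)!\,(l!)^2}\,r^{2l+2n+1}\,e^{-pr^2}\,dr \] the order of summation and integration may be reversed, for arbitrary values of $p$.
   Context: $f:[0,\infty)\to\mathbb{R}$; $c_n=2\pi\int_0^\infty f(r)\,r^{n+1}dr$. Condition (1): there is a constant $F$ with $0\le f(r)\le F$ for all $r\ge0$, $c_0$ exists and $c_0>0$. Condition (2b): $c_{2n}$ exists for all $n\in\mathbb{N}_0$ and $c_n^{1/n}=o(n^{1/2})$ as $n\to\infty$. *)

theory Defs
  imports "HOL-Analysis.Analysis" "HOL-Library.Landau_Symbols"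
begin

text \<open>Moments c_n = 2 pi int_0^infty f(r) r^(n+1) dr (Henstock-Kurzweil integral;
  for nonnegative f this coincides with the Lebesgue integral).\<close>
definition moment :: "(real \<Rightarrow> real) \<Rightarrow> nat \<Rightarrow> real" where
  "moment f n = 2 * pi * integral {0..} (\<lambda>r. f r * r ^ (n + 1))"

definition moment_exists :: "(real \<Rightarrow> real) \<Rightarrow> nat \<Rightarrow> bool" where
  "moment_exists f n \<longleftrightarrow> (\<lambda>r. f r * r ^ (n + 1)) integrable_on {0..}"

definition cond1 :: "(real \<Rightarrow> real) \<Rightarrow> bool" where
  "cond1 f \<longleftrightarrow> (\<exists>F. \<forall>r\<ge>0. 0 \<le> f r \<and> f r \<le> F) \<and> moment_exists f 0 \<and> moment f 0 > 0"

definition cond2b :: "(real \<Rightarrow> real) \<Rightarrow> bool" where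
  "cond2b f \<longleftrightarrow> (\<forall>n. moment_exists f (2 * n)) \<and>
     (\<lambda>n. moment f n powr (1 / real n)) \<in> o(\<lambda>n. sqrt (real n))"

definition term11 :: "(real \<Rightarrow> real) \<Rightarrow> real \<Rightarrow> nat \<Rightarrow> nat \<Rightarrow> real \<Rightarrow> real" where
  "term11 f p n k r = (p / pi) * moment f (2 * k) * p ^ k *
     (\<Sum>l=0..k. (-1) ^ (k - l) * p ^ l / (fact (k - l) * (fact l)\<^sup>2)
        * r ^ (2 * l + 2 * n + 1) * exp (- p * r\<^sup>2))"

end

theory Submission
  imports Defs "HOL-Real_Asymp.Real_Asymp"
begin

text \<open>
  Every summand is dominated, uniformly in r >= 0, by D_k * r exp(-p r^2/2): half of the
  Gaussian absorbs the power r^(2(l+n)) at the cost of (l+n)! (2/p)^(l+n), and the binomial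
  theorem collects the inner sum over l into D_k = const * c_2k (5p)^k / k!. The growth
  condition c_n^(1/n) = o(sqrt n) gives c_2k <= (2 eps^2 k)^k for large k, which together with
  k^k <= e^k k! makes the series of the D_k converge for every p. Dominated convergence for the
  partial sums then interchanges summation and integration.
\<close>

lemma power_le_fact_mult_exp:
  fixes x :: real assumes "x \<ge> 0" shows "x ^ m \<le> fact m * exp x"
proof -
  have exp_series: "(\<lambda>i. x ^ i / fact i) sums exp x"
    using exp_converges[of x] by (simp add: scaleR_conv_of_real divide_inverse mult.commute)
  have "(\<Sum>i\<in>{m}. x ^ i / fact i) \<le> (\<Sum>i. x ^ i / fact i)"
    using assms by (intro sum_le_suminf sums_summable[OF exp_series]) auto
  then show ?thesis
    using sums_unique[OF exp_series] by (simp add: divide_le_eq mult.commute)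
qed

lemma power_le_if_powr_inverse_le:
  fixes c b :: real assumes "c \<ge> 0" "n > 0" "c powr (1 / real n) \<le> b"
  shows "c \<le> b ^ n"
proof -
  have "c = (c powr (1 / real n)) ^ n"
    using assms by (cases "c = 0") (auto simp: powr_realpow [symmetric] powr_powr)
  also have "\<dots> \<le> b ^ n"
    using assms(3) by (intro power_mono) auto
  finally show ?thesis .
qed

lemma fact_add_le_pow2_mult: "fact (a + b) \<le> (2::real) ^ (a + b) * fact a * fact b"
proof -
  have "fact (a + b) = fact a * fact b * ((a + b) choose a)"
    using binomial_fact_lemma[of a "a + b"] by simp
  also have "\<dots> \<le> fact a * fact b * (2::nat) ^ (a + b)"
    using binomial_le_pow2 by simp
  finally have "fact (a + b) \<le> (2::nat) ^ (a + b) * fact a * fact b"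
    by (simp add: mult_ac)
  then have "real (fact (a + b)) \<le> real (2 ^ (a + b) * fact a * fact b)"
    by (rule of_nat_mono)
  then show ?thesis
    by simp
qed

lemma power2_power_mult_exp_le:
  fixes q r :: real assumes "q > 0"
  shows "(r\<^sup>2) ^ m * exp (- q * r\<^sup>2) \<le> fact m / q ^ m"
proof -
  have "(q * r\<^sup>2) ^ m \<le> fact m * exp (q * r\<^sup>2)"
    using assms by (intro power_le_fact_mult_exp) auto
  then show ?thesis
    using assms by (simp add: power_mult_distrib field_simps exp_minus)
qed

lemma has_integral_x_exp_neg_square:
  fixes q :: real assumes "q > 0"
  shows "((\<lambda>r. r * exp (- q * r\<^sup>2)) has_integral 1 / (2 * q)) {0..}"
proof (intro has_integral_to_inf integrable_continuous_interval continuous_intros)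
  have integral_0_y:
    "((\<lambda>r. r * exp (- q * r\<^sup>2)) has_integral (1 - exp (- q * y\<^sup>2)) / (2 * q)) {0..y}"
    if "y \<ge> 0" for y
  proof -
    have "((\<lambda>r. r * exp (- q * r\<^sup>2)) has_integral
        - exp (- q * y\<^sup>2) / (2 * q) - - exp (- q * 0\<^sup>2) / (2 * q)) {0..y}"
      using that assms
      by (intro fundamental_theorem_of_calculus)
         (auto intro!: derivative_eq_intros
               simp flip: has_real_derivative_iff_has_vector_derivative simp: field_simps)
    then show ?thesis
      by (simp add: diff_divide_distrib)
  qed
  have "\<forall>\<^sub>F y in at_top.
      integral {0..y} (\<lambda>r. r * exp (- q * r\<^sup>2)) = (1 - exp (- q * y\<^sup>2)) / (2 * q)"
    by (intro eventually_mono[OF eventually_ge_at_top[of 0]] integral_unique integral_0_y)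
  moreover have "((\<lambda>y::real. (1 - exp (- q * y\<^sup>2)) / (2 * q)) \<longlongrightarrow> 1 / (2 * q)) at_top"
    using assms by real_asymp (simp add: field_simps)
  ultimately show "((\<lambda>y. integral {0..y} (\<lambda>r. r * exp (- q * r\<^sup>2))) \<longlongrightarrow> 1 / (2 * q)) at_top"
    by (simp add: tendsto_cong)
qed auto

lemma summable_even_over_fact_if_root_little_o_sqrt:
  fixes a :: "nat \<Rightarrow> real" and y :: real
  assumes nonneg: "\<And>k. a (2 * k) \<ge> 0"
    and growth: "(\<lambda>n. a n powr (1 / real n)) \<in> o(\<lambda>n. sqrt (real n))"
    and "y > 0"
  shows "summable (\<lambda>k. a (2 * k) * y ^ k / fact k)"
proof -
  define \<epsilon> where "\<epsilon> = sqrt (1 / (4 * exp 1 * y))"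
  have "\<epsilon> > 0" and \<epsilon>_sq: "2 * \<epsilon>\<^sup>2 * y * exp 1 = 1 / 2"
    using \<open>y > 0\<close> by (auto simp: \<epsilon>_def)
  obtain N where N: "\<And>n. n \<ge> N \<Longrightarrow> a n powr (1 / real n) \<le> \<epsilon> * sqrt (real n)"
    using landau_o.smallD[OF growth \<open>\<epsilon> > 0\<close>] by (auto simp: eventually_at_top_linorder)
  have bound: "norm (a (2 * k) * y ^ k / fact k) \<le> (1 / 2) ^ k" if "k \<ge> max N 1" for k
  proof -
    have "a (2 * k) \<le> (\<epsilon> * sqrt (real (2 * k))) ^ (2 * k)"
      using that N[of "2 * k"] nonneg[of k] by (intro power_le_if_powr_inverse_le) auto
    also have "\<dots> = (2 * \<epsilon>\<^sup>2 * real k) ^ k"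
      by (simp add: power_mult power_mult_distrib)
    finally have a_le: "a (2 * k) \<le> (2 * \<epsilon>\<^sup>2 * real k) ^ k" .
    have "norm (a (2 * k) * y ^ k / fact k) = a (2 * k) * y ^ k / fact k"
      using nonneg[of k] \<open>y > 0\<close> by simp
    also have "\<dots> \<le> (2 * \<epsilon>\<^sup>2 * real k) ^ k * y ^ k / fact k"
      using a_le \<open>y > 0\<close> by (intro divide_right_mono mult_right_mono) auto
    also have "\<dots> = (2 * \<epsilon>\<^sup>2 * y) ^ k * (real k ^ k / fact k)"
      by (simp add: power_mult_distrib)
    also have "\<dots> \<le> (2 * \<epsilon>\<^sup>2 * y) ^ k * exp 1 ^ k"
      using power_le_fact_mult_exp[of "real k" k] \<open>y > 0\<close>
      by (intro mult_left_mono) (auto simp: divide_le_eq mult.commute simp flip: exp_of_nat_mult)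
    also have "\<dots> = (1 / 2) ^ k"
      by (simp flip: \<epsilon>_sq power_mult_distrib)
    finally show ?thesis .
  qed
  have "summable (\<lambda>k. (1 / 2 :: real) ^ k)"
    by (rule summable_geometric) simp
  then show ?thesis
    using bound by (rule summable_comparison_test')
qed

lemma
  fixes g :: "nat \<Rightarrow> 'n::euclidean_space \<Rightarrow> 'm::euclidean_space"
  assumes g: "\<And>k. g k integrable_on S" and h: "h integrable_on S"
    and D: "summable D" "\<And>k. D k \<ge> 0" and h_nonneg: "\<And>x. x \<in> S \<Longrightarrow> h x \<ge> 0"
    and dom: "\<And>k x. x \<in> S \<Longrightarrow> norm (g k x) \<le> D k * h x"
  shows summable_dominated: "\<And>x. x \<in> S \<Longrightarrow> summable (\<lambda>k. g k x)"
    and integrable_suminf_dominated: "(\<lambda>x. \<Sum>k. g k x) integrable_on S"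
    and sums_integral_dominated: "(\<lambda>k. integral S (g k)) sums integral S (\<lambda>x. \<Sum>k. g k x)"
proof -
  show summable: "summable (\<lambda>k. g k x)" if "x \<in> S" for x
    using summable_mult2[OF D(1), of "h x"] by (rule summable_comparison_test') (rule dom[OF that])
  have partial_sums_le: "norm (\<Sum>k<N. g k x) \<le> suminf D * h x" if "x \<in> S" for N x
  proof -
    have "norm (\<Sum>k<N. g k x) \<le> (\<Sum>k<N. norm (g k x))"
      by (rule norm_sum)
    also have "\<dots> \<le> (\<Sum>k<N. D k) * h x"
      unfolding sum_distrib_right using dom[OF that] by (intro sum_mono)
    also have "\<dots> \<le> suminf D * h x"
      using sum_le_suminf[OF D(1), of "{..<N}"] D(2) h_nonneg[OF that]
      by (intro mult_right_mono) auto
    finally show ?thesis .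
  qed
  have partial_sums_integrable: "(\<lambda>x. \<Sum>k<N. g k x) integrable_on S" for N
    using g by (intro integrable_sum) auto
  have majorant_integrable: "(\<lambda>x. suminf D * h x) integrable_on S"
    using integrable_on_cmult_left[OF h, of "suminf D"] by simp
  have partial_sums_tendsto: "(\<lambda>N. \<Sum>k<N. g k x) \<longlonglongrightarrow> (\<Sum>k. g k x)" if "x \<in> S" for x
    using summable[OF that] by (rule summable_LIMSEQ)
  note partial_sums_dominated =
    partial_sums_integrable majorant_integrable partial_sums_le partial_sums_tendsto
  show "(\<lambda>x. \<Sum>k. g k x) integrable_on S"
    using partial_sums_dominated by (rule dominated_convergence(1))
  have partial_integrals_tendsto:
    "(\<lambda>N. integral S (\<lambda>x. \<Sum>k<N. g k x)) \<longlonglongrightarrow> integral S (\<lambda>x. \<Sum>k. g k x)"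
    using partial_sums_dominated by (rule dominated_convergence(2))
  show "(\<lambda>k. integral S (g k)) sums integral S (\<lambda>x. \<Sum>k. g k x)"
    using partial_integrals_tendsto g by (simp add: sums_def integral_sum)
qed

lemma abs_summand_le_binomial:
  fixes p r :: real assumes "p > 0" "r \<ge> 0" "l \<le> k"
  shows "\<bar>(-1) ^ (k - l) * p ^ l / (fact (k - l) * (fact l)\<^sup>2)
           * r ^ (2 * l + 2 * n + 1) * exp (- p * r\<^sup>2)\<bar>
    \<le> fact n * (4 / p) ^ n * (real (k choose l) * 4 ^ l / fact k) * (r * exp (- (p / 2) * r\<^sup>2))"
proof -
  define \<phi> where "\<phi> = r * exp (- (p / 2) * r\<^sup>2)"
  define c where "c = p ^ l / (fact (k - l) * (fact l)\<^sup>2)"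
  have "\<phi> \<ge> 0" "c \<ge> 0"
    using assms by (auto simp: \<phi>_def c_def)
  have "r ^ (2 * l + 2 * n + 1) * exp (- p * r\<^sup>2)
      = (r\<^sup>2) ^ (l + n) * exp (- (p / 2) * r\<^sup>2) * \<phi>"
    by (simp add: \<phi>_def algebra_simps flip: exp_add power_mult)
  then have "\<bar>(-1) ^ (k - l) * p ^ l / (fact (k - l) * (fact l)\<^sup>2)
           * r ^ (2 * l + 2 * n + 1) * exp (- p * r\<^sup>2)\<bar>
      = c * ((r\<^sup>2) ^ (l + n) * exp (- (p / 2) * r\<^sup>2)) * \<phi>"
    using assms \<open>\<phi> \<ge> 0\<close> by (simp add: c_def abs_mult power_abs mult.assoc)
  also have "\<dots> \<le> c * (fact (l + n) / (p / 2) ^ (l + n)) * \<phi>"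
    using assms \<open>\<phi> \<ge> 0\<close> \<open>c \<ge> 0\<close>
    by (intro mult_right_mono mult_left_mono power2_power_mult_exp_le) auto
  also have "\<dots> \<le> c * (2 ^ (l + n) * fact l * fact n / (p / 2) ^ (l + n)) * \<phi>"
    using assms \<open>\<phi> \<ge> 0\<close> \<open>c \<ge> 0\<close>
    by (intro mult_right_mono mult_left_mono divide_right_mono fact_add_le_pow2_mult) auto
  also have "\<dots> = fact n * (4 / p) ^ n * (4 ^ l / (fact l * fact (k - l))) * \<phi>"
    using assms
    by (simp add: c_def power_add power_divide power2_eq_square field_simps flip: power_mult_distrib)
  also have "\<dots> = fact n * (4 / p) ^ n * (real (k choose l) * 4 ^ l / fact k) * \<phi>"
    using assms by (simp add: binomial_fact)
  finally show ?thesis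
    unfolding \<phi>_def .
qed

lemma abs_alternating_sum_le:
  fixes p r :: real assumes "p > 0" "r \<ge> 0"
  shows "\<bar>\<Sum>l=0..k. (-1) ^ (k - l) * p ^ l / (fact (k - l) * (fact l)\<^sup>2)
           * r ^ (2 * l + 2 * n + 1) * exp (- p * r\<^sup>2)\<bar>
    \<le> fact n * (4 / p) ^ n * (5 ^ k / fact k) * (r * exp (- (p / 2) * r\<^sup>2))"
    (is "\<bar>\<Sum>l=0..k. ?s l\<bar> \<le> _")
proof -
  have "\<bar>\<Sum>l=0..k. ?s l\<bar> \<le> (\<Sum>l=0..k. \<bar>?s l\<bar>)"
    by (rule sum_abs)
  also have "\<dots> \<le> (\<Sum>l=0..k.
      fact n * (4 / p) ^ n * (real (k choose l) * 4 ^ l / fact k) * (r * exp (- (p / 2) * r\<^sup>2)))"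
    using assms by (intro sum_mono abs_summand_le_binomial) auto
  also have "\<dots> = fact n * (4 / p) ^ n * ((\<Sum>l\<le>k. real (k choose l) * 4 ^ l) / fact k)
      * (r * exp (- (p / 2) * r\<^sup>2))"
    by (simp add: atLeast0AtMost sum_distrib_left sum_distrib_right sum_divide_distrib)
  also have "(\<Sum>l\<le>k. real (k choose l) * 4 ^ l) = 5 ^ k"
    using binomial_ring[of "4::real" 1 k] by simp
  finally show ?thesis .
qed

lemma abs_term11_le:
  assumes "moment f (2 * k) \<ge> 0" "p > 0" "r \<ge> 0"
  shows "\<bar>term11 f p n k r\<bar>
    \<le> p / pi * fact n * (4 / p) ^ n * (moment f (2 * k) * (5 * p) ^ k / fact k)
        * (r * exp (- (p / 2) * r\<^sup>2))"
proof -
  define c where "c = p / pi * moment f (2 * k) * p ^ k"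
  have "c \<ge> 0"
    using assms by (simp add: c_def)
  have "\<bar>term11 f p n k r\<bar>
      = c * \<bar>\<Sum>l=0..k. (-1) ^ (k - l) * p ^ l / (fact (k - l) * (fact l)\<^sup>2)
              * r ^ (2 * l + 2 * n + 1) * exp (- p * r\<^sup>2)\<bar>"
    using assms by (simp add: term11_def c_def abs_mult)
  also have "\<dots> \<le> c * (fact n * (4 / p) ^ n * (5 ^ k / fact k) * (r * exp (- (p / 2) * r\<^sup>2)))"
    using assms \<open>c \<ge> 0\<close> by (intro mult_left_mono abs_alternating_sum_le) auto
  also have "\<dots> = p / pi * fact n * (4 / p) ^ n * (moment f (2 * k) * (5 * p) ^ k / fact k)
      * (r * exp (- (p / 2) * r\<^sup>2))"
    by (simp add: c_def power_mult_distrib field_simps)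
  finally show ?thesis .
qed

lemma integrable_on_term11:
  assumes "moment f (2 * k) \<ge> 0" "p > 0"
  shows "term11 f p n k integrable_on {0..}"
proof (rule measurable_bounded_by_integrable_imp_integrable_real)
  let ?C = "p / pi * fact n * (4 / p) ^ n * (moment f (2 * k) * (5 * p) ^ k / fact k)"
  have gaussian: "(\<lambda>r. r * exp (- (p / 2) * r\<^sup>2)) integrable_on {0..}"
    using has_integral_x_exp_neg_square[of "p / 2"] assms(2) by auto
  show "(\<lambda>r. ?C * (r * exp (- (p / 2) * r\<^sup>2))) integrable_on {0..}"
    using integrable_on_cmult_left[OF gaussian, of ?C] by simp
  show "\<bar>term11 f p n k r\<bar> \<le> ?C * (r * exp (- (p / 2) * r\<^sup>2))" if "r \<in> {0..}" for r
    using abs_term11_le[OF assms] that by simp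
  have "continuous_on {0..} (term11 f p n k)"
    unfolding term11_def by (intro continuous_intros)
  then show "term11 f p n k \<in> borel_measurable (lebesgue_on {0..})"
    by (rule continuous_imp_measurable_on_sets_lebesgue) simp
qed simp

lemma moment_nonneg:
  assumes "\<And>r. r \<ge> 0 \<Longrightarrow> f r \<ge> 0" "moment_exists f n"
  shows "moment f n \<ge> 0"
proof -
  have "integral {0..} (\<lambda>r. f r * r ^ (n + 1)) \<ge> 0"
    using assms(2) unfolding moment_exists_def
    by (rule Henstock_Kurzweil_Integration.integral_nonneg) (simp add: assms(1))
  then show ?thesis
    by (simp add: moment_def)
qed

theorem lemma11:
  fixes f :: "real \<Rightarrow> real" and p :: real and n :: nat
  assumes "cond1 f" and "cond2b f" and "p > 0"
  shows "(\<forall>r\<ge>0. summable (\<lambda>k. term11 f p n k r))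
    \<and> (\<forall>k. term11 f p n k integrable_on {0..})
    \<and> (\<lambda>r. \<Sum>k. term11 f p n k r) integrable_on {0..}
    \<and> summable (\<lambda>k. 2 * pi * integral {0..} (term11 f p n k))
    \<and> 2 * pi * integral {0..} (\<lambda>r. \<Sum>k. term11 f p n k r)
        = (\<Sum>k. 2 * pi * integral {0..} (term11 f p n k))"
proof -
  have moment_even_nonneg: "moment f (2 * k) \<ge> 0" for k
    using assms(1,2) by (intro moment_nonneg) (auto simp: cond1_def cond2b_def)
  define D
    where "D k = p / pi * fact n * (4 / p) ^ n * (moment f (2 * k) * (5 * p) ^ k / fact k)" for k
  define \<phi> where "\<phi> r = r * exp (- (p / 2) * r\<^sup>2)" for r
  have summands_integrable: "term11 f p n k integrable_on {0..}" for k
    using assms(3) moment_even_nonneg by (intro integrable_on_term11)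
  have \<phi>_integrable: "\<phi> integrable_on {0..}"
    unfolding \<phi>_def using has_integral_x_exp_neg_square[of "p / 2"] assms(3) by auto
  have D_summable: "summable D"
    unfolding D_def using assms moment_even_nonneg
    by (intro summable_mult summable_even_over_fact_if_root_little_o_sqrt) (auto simp: cond2b_def)
  have D_nonneg: "D k \<ge> 0" for k
    unfolding D_def using assms(3) moment_even_nonneg by simp
  have \<phi>_nonneg: "\<phi> r \<ge> 0" if "r \<in> {0..}" for r
    unfolding \<phi>_def using that by simp
  have summands_dominated: "norm (term11 f p n k r) \<le> D k * \<phi> r" if "r \<in> {0..}" for k r
    unfolding D_def \<phi>_def real_norm_def
    using that assms(3) moment_even_nonneg by (intro abs_term11_le) auto
  note dominated =
    summands_integrable \<phi>_integrable D_summable D_nonneg \<phi>_nonneg summands_dominated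
  have "(\<lambda>k. 2 * pi * integral {0..} (term11 f p n k))
      sums (2 * pi * integral {0..} (\<lambda>r. \<Sum>k. term11 f p n k r))"
    by (intro sums_mult sums_integral_dominated[OF dominated])
  then show ?thesis
    using summands_integrable summable_dominated[OF dominated]
      integrable_suminf_dominated[OF dominated]
    by (auto simp: sums_iff)
qed

end
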